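(* Let $Q$ be a quantum circuit acting on $w$ qubits and $N$ a positive integer. Let $R^{(N)}$ be the circuit on $Nw+1$ qubits, consisting of a single-qubit register $\mathsf{O}$ (the first qubit) and, for each $j\in\{1,\dots,N\}$, a $(w-1)$-qubit register $\mathsf{R}_j$ and a single-qubit register $\mathsf{X}_j$, which for $j=1,\dots,N$ in turn applies $Q$ to $(\mathsf{O},\mathsf{R}_j)$ (with $\mathsf{O}$ as $Q$'s first qubit) and then the CNOT with control $\mathsf{O}$ and target $\mathsf{X}_j$; its output qubit is $\mathsf{O}$. Then \[p_{\mathrm{acc}}(R^{(N)},1)=\frac12+\frac12\bigl(2p_{\mathrm{acc}}(Q,1)-1\bigr)^N.\]
   Context: For a circuit $Q$ on $w$ qubits and $1\le k\le w$, $p_{\mathrm{acc}}(Q,k)=\mathrm{tr}\,\Pi_{\mathrm{acc}}Q\rho^{(w,k)}_{\mathrm{init}}Q^\dagger$, where $\rho^{(w,k)}_{\mathrm{init}}=(|0\rangle\langle0|)^{\otimes k}\otimes(I/2)^{\otimes(w-k)}$ and $\Pi_{\mathrm{acc}}=|0\rangle\langle0|\otimes I^{\otimes(w-1)}$; i.e., the first $k$ qubits start in $|0\rangle$, the remaining qubits are maximally mixed, and acceptance means the first qubit is measured as $0$ in the computational basis. For $R^{(N)}$ the first qubit is $\mathsf{O}$, so only $\mathsf{O}$ is clean. *)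

theory Defs
  imports Complex_Main "Jordan_Normal_Form.Matrix"
begin

definition adj :: "complex mat \<Rightarrow> complex mat" where
  "adj A = mat (dim_col A) (dim_row A) (\<lambda>(i,j). cnj (A $$ (j,i)))"

definition tr :: "complex mat \<Rightarrow> complex" where
  "tr A = (\<Sum>i<dim_row A. A $$ (i,i))"

definition unitary_mat :: "nat \<Rightarrow> complex mat \<Rightarrow> bool" where
  "unitary_mat d U \<longleftrightarrow> U \<in> carrier_mat d d \<and> U * adj U = 1\<^sub>m d \<and> adj U * U = 1\<^sub>m d"

text \<open>A basis state of an n-qubit system is an index i < 2^n; qubit q (q < n, qubit 0 is
  the first qubit, i.e. the leftmost tensor factor) is the bit of weight 2^(n-1-q).\<close>

definition qbit :: "nat \<Rightarrow> nat \<Rightarrow> nat \<Rightarrow> bool" where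
  "qbit n i q = odd (i div 2 ^ (n - 1 - q))"

definition subidx :: "nat \<Rightarrow> nat list \<Rightarrow> nat \<Rightarrow> nat" where
  "subidx n ps i = (\<Sum>t<length ps. if qbit n i (ps ! t) then 2 ^ (length ps - 1 - t) else 0)"

text \<open>The n-qubit operator applying the (length ps)-qubit gate U to the qubits ps
  (ps ! 0 is U's first qubit), acting as identity on all other qubits.\<close>
definition embed :: "nat \<Rightarrow> nat list \<Rightarrow> complex mat \<Rightarrow> complex mat" where
  "embed n ps U = mat (2 ^ n) (2 ^ n) (\<lambda>(i,j).
     if (\<forall>q<n. q \<notin> set ps \<longrightarrow> qbit n i q = qbit n j q)
     then U $$ (subidx n ps i, subidx n ps j) else 0)"

text \<open>CNOT on two qubits, first qubit control, second target.\<close>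
definition cnot :: "complex mat" where
  "cnot = mat 4 4 (\<lambda>(i,j). if i = (if j = 2 then 3 else if j = 3 then 2 else j) then 1 else 0)"

text \<open>rho_init^(w,k): first k qubits in |0>, remaining w-k maximally mixed.\<close>
definition rho_init :: "nat \<Rightarrow> nat \<Rightarrow> complex mat" where
  "rho_init w k = mat (2 ^ w) (2 ^ w) (\<lambda>(i,j).
     if i = j \<and> (\<forall>q<k. \<not> qbit w i q) then 1 / 2 ^ (w - k) else 0)"

definition Pi_acc :: "nat \<Rightarrow> complex mat" where
  "Pi_acc w = mat (2 ^ w) (2 ^ w) (\<lambda>(i,j). if i = j \<and> \<not> qbit w i 0 then 1 else 0)"

definition p_acc :: "complex mat \<Rightarrow> nat \<Rightarrow> nat \<Rightarrow> real" where
  "p_acc Q w k = Re (tr (Pi_acc w * Q * rho_init w k * adj Q))"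

text \<open>Layout on N*w+1 qubits: qubit 0 is O; for j = 1..N the register R_j is qubits
  (j-1)*w+1, ..., j*w-1 and X_j is qubit j*w.\<close>

definition R_reg :: "nat \<Rightarrow> nat \<Rightarrow> nat list" where
  "R_reg w j = [(j - 1) * w + 1 ..< j * w]"

definition X_reg :: "nat \<Rightarrow> nat \<Rightarrow> nat" where
  "X_reg w j = j * w"

fun Rsteps :: "complex mat \<Rightarrow> nat \<Rightarrow> nat \<Rightarrow> nat \<Rightarrow> complex mat" where
  "Rsteps Q w n 0 = 1\<^sub>m (2 ^ n)"
| "Rsteps Q w n (Suc j) =
     embed n [0, X_reg w (Suc j)] cnot * embed n (0 # R_reg w (Suc j)) Q * Rsteps Q w n j"

definition Rcirc :: "complex mat \<Rightarrow> nat \<Rightarrow> nat \<Rightarrow> complex mat" where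
  "Rcirc Q w N = Rsteps Q w (N * w + 1) N"

end

theory Submission
  imports Defs
begin

text \<open>
  The target X_j of the j-th CNOT starts maximally mixed, so the CNOT copies the
  computational-basis value of O into a fresh register and thereby decoheres O. Hence O evolves
  as a classical Markov chain: a step takes O = b' to O = b with the probability that Q maps
  |b'>|r> to a state whose first qubit is b, averaged over the maximally mixed register R_j.
  Unitarity of Q makes this chain symmetric with staying probability p = p_acc(Q,1), and N
  steps starting from O = 0 end in O = 0 with probability 1/2 + (2p - 1)^N / 2.

  Formally, the decoherence is a support property of the partial products S_j of the circuit:
  at a nonzero entry (k, i) of S_j the O-bit of k is the XOR of the X_j-bits of k and i, and k
  agrees with i on all qubits after X_j. So among the indices that differ only on the qubits
  (O, R_{j+1}) a column of S_j has at most one nonzero entry, and the probabilities of the next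
  step add up without interference.
\<close>

section \<open>Binary encoding of basis states\<close>

definition nat_of_bits :: "nat \<Rightarrow> (nat \<Rightarrow> bool) \<Rightarrow> nat" where
  "nat_of_bits m F = (\<Sum>t<m. if F t then 2 ^ (m - 1 - t) else 0)"

lemma nat_of_bits_eq_horner_sum:
  "nat_of_bits m F = horner_sum of_bool 2 (map (\<lambda>e. F (m - 1 - e)) [0..<m])"
proof -
  have "nat_of_bits m F = (\<Sum>e<m. of_bool (F (m - 1 - e)) * 2 ^ e)"
    unfolding nat_of_bits_def by (subst sum.nat_diff_reindex[symmetric]) (intro sum.cong refl, simp)
  also have "\<dots> = horner_sum of_bool 2 (map (\<lambda>e. F (m - 1 - e)) [0..<m])"
    unfolding horner_sum_eq_sum by (intro sum.cong) auto
  finally show ?thesis .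
qed

lemma nat_of_bits_Suc:
  "nat_of_bits (Suc m) F = (if F 0 then 2 ^ m else 0) + nat_of_bits m (\<lambda>t. F (Suc t))"
  unfolding nat_of_bits_def sum.lessThan_Suc_shift by (auto intro!: sum.cong)

lemma bit_nat_of_bits: "bit (nat_of_bits m F) e \<longleftrightarrow> e < m \<and> F (m - 1 - e)"
  by (auto simp: nat_of_bits_eq_horner_sum bit_horner_sum_bit_iff)

lemma qbit_nat_of_bits: "t < m \<Longrightarrow> qbit m (nat_of_bits m F) t = F t"
  by (simp add: qbit_def bit_nat_of_bits flip: bit_iff_odd)

lemma nat_of_bits_less: "nat_of_bits m F < 2 ^ m"
proof -
  have "nat_of_bits m F = take_bit m (nat_of_bits m F)"
    by (rule bit_eqI) (auto simp: bit_take_bit_iff bit_nat_of_bits)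
  then show ?thesis by (metis take_bit_nat_less_exp)
qed

lemma nat_of_bits_cong: "(\<And>t. t < m \<Longrightarrow> F t = G t) \<Longrightarrow> nat_of_bits m F = nat_of_bits m G"
  unfolding nat_of_bits_def by (rule sum.cong) auto

lemma nat_of_bits_qbit: "i < 2 ^ m \<Longrightarrow> nat_of_bits m (qbit m i) = i"
proof (rule bit_eqI)
  fix e assume "i < 2 ^ m"
  then have "bit i e \<Longrightarrow> e < m" by (metis bit_take_bit_iff take_bit_nat_eq_self_iff)
  then show "bit (nat_of_bits m (qbit m i)) e \<longleftrightarrow> bit i e"
    by (auto simp: bit_nat_of_bits qbit_def simp flip: bit_iff_odd)
qed

lemma qbit_eqI:
  assumes "i < 2 ^ m" "j < 2 ^ m" "\<And>t. t < m \<Longrightarrow> qbit m i t = qbit m j t"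
  shows "i = j"
  using nat_of_bits_cong[of m "qbit m i" "qbit m j"] assms by (simp add: nat_of_bits_qbit)

lemma subidx_eq_nat_of_bits: "subidx n ps i = nat_of_bits (length ps) (\<lambda>t. qbit n i (ps ! t))"
  unfolding subidx_def nat_of_bits_def ..

section \<open>Gates acting on a block of qubits\<close>

definition list_pos :: "'a list \<Rightarrow> 'a \<Rightarrow> nat" where
  "list_pos xs x = (THE t. t < length xs \<and> xs ! t = x)"

lemma list_pos_nth: "distinct xs \<Longrightarrow> t < length xs \<Longrightarrow> list_pos xs (xs ! t) = t"
  unfolding list_pos_def by (rule the_equality) (auto simp: nth_eq_iff_index_eq)

lemma list_pos_in_set:
  "distinct xs \<Longrightarrow> x \<in> set xs \<Longrightarrow> list_pos xs x < length xs \<and> xs ! list_pos xs x = x"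
  by (metis list_pos_nth in_set_conv_nth)

text \<open>
  A basis index i splits into subidx n ps i, its bits on the qubits ps, and
  erase_block n ps i, the index with these bits cleared; fill_block puts the two back together.
\<close>

definition erase_block :: "nat \<Rightarrow> nat list \<Rightarrow> nat \<Rightarrow> nat" where
  "erase_block n ps i = nat_of_bits n (\<lambda>q. q \<notin> set ps \<and> qbit n i q)"

definition fill_block :: "nat \<Rightarrow> nat list \<Rightarrow> nat \<Rightarrow> nat \<Rightarrow> nat" where
  "fill_block n ps c s = nat_of_bits n (\<lambda>q.
     if q \<in> set ps then qbit (length ps) s (list_pos ps q) else qbit n c q)"

definition zero_on_block :: "nat \<Rightarrow> nat list \<Rightarrow> nat set" where
  "zero_on_block n ps = {c. c < 2 ^ n \<and> (\<forall>q<n. q \<in> set ps \<longrightarrow> \<not> qbit n c q)}"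

lemma finite_zero_on_block [simp]: "finite (zero_on_block n ps)"
  unfolding zero_on_block_def by simp

lemma qbit_erase_block: "q < n \<Longrightarrow> qbit n (erase_block n ps i) q \<longleftrightarrow> q \<notin> set ps \<and> qbit n i q"
  unfolding erase_block_def by (rule qbit_nat_of_bits)

lemma qbit_fill_block: "q < n \<Longrightarrow> qbit n (fill_block n ps c s) q =
    (if q \<in> set ps then qbit (length ps) s (list_pos ps q) else qbit n c q)"
  unfolding fill_block_def by (rule qbit_nat_of_bits)

lemma fill_block_less: "fill_block n ps c s < 2 ^ n"
  unfolding fill_block_def by (rule nat_of_bits_less)

lemma erase_block_mem: "erase_block n ps i \<in> zero_on_block n ps"
  unfolding zero_on_block_def erase_block_def by (simp add: nat_of_bits_less qbit_nat_of_bits)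

lemma subidx_less: "subidx n ps i < 2 ^ length ps"
  unfolding subidx_eq_nat_of_bits by (rule nat_of_bits_less)

lemma index_mult_mat_sum:
  assumes "A \<in> carrier_mat m d" "B \<in> carrier_mat d d'" "k < m" "i < d'"
  shows "(A * B) $$ (k, i) = (\<Sum>l<d. A $$ (k, l) * B $$ (l, i))"
  using assms by (simp add: index_mult_mat scalar_prod_def atLeast0LessThan)

lemma embed_carrier: "embed n ps U \<in> carrier_mat (2 ^ n) (2 ^ n)"
  unfolding embed_def by simp

locale qubit_block =
  fixes n :: nat and ps :: "nat list"
  assumes distinct_block: "distinct ps" and block_qubits: "set ps \<subseteq> {..<n}"
begin

lemma qbit_fill_block_nth:
  assumes "t < length ps"
  shows "qbit n (fill_block n ps c s) (ps ! t) = qbit (length ps) s t"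
proof -
  have "ps ! t \<in> set ps" using assms by simp
  with block_qubits have "ps ! t < n" by auto
  with \<open>ps ! t \<in> set ps\<close> show ?thesis
    by (simp add: qbit_fill_block list_pos_nth[OF distinct_block assms])
qed

lemma subidx_fill_block: "s < 2 ^ length ps \<Longrightarrow> subidx n ps (fill_block n ps c s) = s"
  by (simp add: subidx_eq_nat_of_bits qbit_fill_block_nth nat_of_bits_qbit cong: nat_of_bits_cong)

lemma fill_block_erase_block_subidx:
  assumes "i < 2 ^ n"
  shows "fill_block n ps (erase_block n ps i) (subidx n ps i) = i"
proof (rule qbit_eqI[OF fill_block_less assms])
  fix q assume q: "q < n"
  show "qbit n (fill_block n ps (erase_block n ps i) (subidx n ps i)) q = qbit n i q"
  proof (cases "q \<in> set ps")
    case True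
    with list_pos_in_set[OF distinct_block] have "list_pos ps q < length ps" "ps ! list_pos ps q = q"
      by auto
    with True q show ?thesis
      by (simp add: qbit_fill_block subidx_eq_nat_of_bits qbit_nat_of_bits)
  next
    case False
    with q show ?thesis by (simp add: qbit_fill_block qbit_erase_block)
  qed
qed

lemma erase_block_fill_block:
  assumes "c \<in> zero_on_block n ps"
  shows "erase_block n ps (fill_block n ps c s) = c"
proof (rule qbit_eqI)
  show "erase_block n ps (fill_block n ps c s) < 2 ^ n"
    by (simp add: erase_block_def nat_of_bits_less)
  show "c < 2 ^ n"
    using assms by (simp add: zero_on_block_def)
  fix q assume "q < n"
  with assms show "qbit n (erase_block n ps (fill_block n ps c s)) q = qbit n c q"
    by (cases "q \<in> set ps") (simp_all add: qbit_erase_block qbit_fill_block zero_on_block_def)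
qed

lemma sum_over_blocks:
  "(\<Sum>i<2 ^ n. f i) = (\<Sum>c\<in>zero_on_block n ps. \<Sum>s<2 ^ length ps. f (fill_block n ps c s))"
proof -
  have "(\<Sum>c\<in>zero_on_block n ps. \<Sum>s<2 ^ length ps. f (fill_block n ps c s)) =
      (\<Sum>x\<in>zero_on_block n ps \<times> {..<2 ^ length ps}. f (fill_block n ps (fst x) (snd x)))"
    by (rule sum.cartesian_product[unfolded split_def])
  also have "\<dots> = (\<Sum>i<2 ^ n. f i)"
  proof (rule sum.reindex_bij_witness[where i = "\<lambda>i. (erase_block n ps i, subidx n ps i)"
        and j = "\<lambda>x. fill_block n ps (fst x) (snd x)"])
    fix x :: "nat \<times> nat" assume "x \<in> zero_on_block n ps \<times> {..<2 ^ length ps}"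
    then show "(erase_block n ps (fill_block n ps (fst x) (snd x)),
        subidx n ps (fill_block n ps (fst x) (snd x))) = x"
      using erase_block_fill_block subidx_fill_block by (cases x) auto
  next
    fix x :: "nat \<times> nat"
    show "fill_block n ps (fst x) (snd x) \<in> {..<2 ^ n}" using fill_block_less by simp
  next
    fix i assume "i \<in> {..<2 ^ n :: nat}"
    then show "fill_block n ps (fst (erase_block n ps i, subidx n ps i))
        (snd (erase_block n ps i, subidx n ps i)) = i"
      using fill_block_erase_block_subidx by simp
  next
    fix i :: nat
    show "(erase_block n ps i, subidx n ps i) \<in> zero_on_block n ps \<times> {..<2 ^ length ps}"
      using erase_block_mem subidx_less by simp
  qed simp
  finally show ?thesis by (rule sym)
qed

lemma embed_entry_fill_block:
  assumes k: "k < 2 ^ n" and c: "c \<in> zero_on_block n ps" and s: "s < 2 ^ length ps"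
  shows "embed n ps U $$ (k, fill_block n ps c s) =
    (if c = erase_block n ps k then U $$ (subidx n ps k, s) else 0)"
proof -
  have "(\<forall>q<n. q \<notin> set ps \<longrightarrow> qbit n k q = qbit n (fill_block n ps c s) q) \<longleftrightarrow>
      c = erase_block n ps k"
  proof
    assume agree: "\<forall>q<n. q \<notin> set ps \<longrightarrow> qbit n k q = qbit n (fill_block n ps c s) q"
    show "c = erase_block n ps k"
    proof (rule qbit_eqI)
      show "c < 2 ^ n" "erase_block n ps k < 2 ^ n"
        using c erase_block_mem by (auto simp: zero_on_block_def)
      fix q assume "q < n"
      with agree c show "qbit n c q = qbit n (erase_block n ps k) q"
        by (cases "q \<in> set ps") (auto simp: qbit_erase_block qbit_fill_block zero_on_block_def)
    qed
  qed (simp add: qbit_erase_block qbit_fill_block)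
  with k fill_block_less[of n ps c s] show ?thesis
    by (simp add: embed_def subidx_fill_block[OF s])
qed

lemma embed_mult_entry:
  assumes M: "M \<in> carrier_mat (2 ^ n) d" and k: "k < 2 ^ n" and i: "i < d"
  shows "(embed n ps U * M) $$ (k, i) = (\<Sum>s<2 ^ length ps.
    U $$ (subidx n ps k, s) * M $$ (fill_block n ps (erase_block n ps k) s, i))"
proof -
  have "(embed n ps U * M) $$ (k, i) = (\<Sum>l<2 ^ n. embed n ps U $$ (k, l) * M $$ (l, i))"
    by (rule index_mult_mat_sum[OF embed_carrier M k i])
  also have "\<dots> = (\<Sum>c\<in>zero_on_block n ps. \<Sum>s<2 ^ length ps.
      if c = erase_block n ps k then U $$ (subidx n ps k, s) * M $$ (fill_block n ps c s, i) else 0)"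
    unfolding sum_over_blocks using k by (intro sum.cong refl) (simp add: embed_entry_fill_block)
  also have "\<dots> = (\<Sum>s<2 ^ length ps.
      U $$ (subidx n ps k, s) * M $$ (fill_block n ps (erase_block n ps k) s, i))"
    using erase_block_mem by (simp add: sum.delta' flip: sum.swap[of _ "zero_on_block n ps"])
  finally show ?thesis .
qed

end

definition cnot_perm :: "nat \<Rightarrow> nat" where
  "cnot_perm r = (if r = 2 then 3 else if r = 3 then 2 else r)"

lemma cnot_entry:
  assumes "r < 4" "s < 4"
  shows "cnot $$ (r, s) = (if s = cnot_perm r then 1 else 0)"
proof -
  have "r = (if s = 2 then 3 else if s = 3 then 2 else s) \<longleftrightarrow> s = cnot_perm r"
    unfolding cnot_perm_def by auto
  with assms show ?thesis by (simp add: cnot_def)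
qed

lemma qbit_cnot_perm:
  "qbit 2 (cnot_perm (nat_of_bits 2 F)) 0 = F 0"
  "qbit 2 (cnot_perm (nat_of_bits 2 F)) 1 = (F 1 \<noteq> F 0)"
proof -
  have F: "nat_of_bits 2 F = (if F 0 then 2 else 0) + (if F 1 then 1 else 0)"
    unfolding nat_of_bits_def by (simp add: numeral_2_eq_2)
  show "qbit 2 (cnot_perm (nat_of_bits 2 F)) 0 = F 0" "qbit 2 (cnot_perm (nat_of_bits 2 F)) 1 = (F 1 \<noteq> F 0)"
    unfolding F by (cases "F 0"; cases "F 1"; simp add: cnot_perm_def qbit_def)+
qed

definition cnot_index :: "nat \<Rightarrow> nat \<Rightarrow> nat \<Rightarrow> nat \<Rightarrow> nat" where
  "cnot_index n a b k = nat_of_bits n (\<lambda>q. if q = b then qbit n k b \<noteq> qbit n k a else qbit n k q)"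

lemma qbit_cnot_index: "q < n \<Longrightarrow>
    qbit n (cnot_index n a b k) q = (if q = b then qbit n k b \<noteq> qbit n k a else qbit n k q)"
  unfolding cnot_index_def by (rule qbit_nat_of_bits)

lemma qbit_cnot_index_control: "a \<noteq> b \<Longrightarrow> a < n \<Longrightarrow> qbit n (cnot_index n a b k) a = qbit n k a"
  by (simp add: qbit_cnot_index)

lemma cnot_index_less: "cnot_index n a b k < 2 ^ n"
  unfolding cnot_index_def by (rule nat_of_bits_less)

lemma cnot_index_cnot_index:
  assumes "a \<noteq> b" "a < n" "k < 2 ^ n"
  shows "cnot_index n a b (cnot_index n a b k) = k"
proof (rule qbit_eqI[OF cnot_index_less assms(3)])
  fix q assume "q < n"
  with assms show "qbit n (cnot_index n a b (cnot_index n a b k)) q = qbit n k q"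
    by (cases "q = b") (auto simp: qbit_cnot_index)
qed

lemma sum_cnot_index:
  assumes "a \<noteq> b" "a < n"
  shows "(\<Sum>k<2 ^ n. f (cnot_index n a b k)) = (\<Sum>k<2 ^ n. f k)"
  by (rule sum.reindex_bij_witness[where i = "cnot_index n a b" and j = "cnot_index n a b"])
    (use assms in \<open>auto simp: cnot_index_cnot_index cnot_index_less\<close>)

lemma embed_cnot_mult_entry:
  assumes ab: "a \<noteq> b" "a < n" "b < n"
    and M: "M \<in> carrier_mat (2 ^ n) d" and k: "k < 2 ^ n" and i: "i < d"
  shows "(embed n [a, b] cnot * M) $$ (k, i) = M $$ (cnot_index n a b k, i)"
proof -
  interpret qubit_block n "[a, b]" using ab by unfold_locales auto
  let ?r = "subidx n [a, b] k" and ?c = "erase_block n [a, b] k"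
  have r: "?r < 4" using subidx_less[of n "[a, b]" k] by simp
  have "(embed n [a, b] cnot * M) $$ (k, i) = (\<Sum>s<4. cnot $$ (?r, s) * M $$ (fill_block n [a, b] ?c s, i))"
    using embed_mult_entry[OF M k i] by simp
  also have "\<dots> = (\<Sum>s<4. if s = cnot_perm ?r then M $$ (fill_block n [a, b] ?c s, i) else 0)"
    using r by (intro sum.cong refl) (simp add: cnot_entry)
  also have "\<dots> = M $$ (fill_block n [a, b] ?c (cnot_perm ?r), i)"
    using r by (simp add: cnot_perm_def)
  also have "fill_block n [a, b] ?c (cnot_perm ?r) = cnot_index n a b k"
  proof (rule qbit_eqI[OF fill_block_less cnot_index_less])
    define F where "F = (\<lambda>t. qbit n k ([a, b] ! t))"
    have "?r = nat_of_bits 2 F"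
      by (simp add: F_def subidx_eq_nat_of_bits numeral_2_eq_2)
    then have "qbit 2 (cnot_perm ?r) 0 = F 0" "qbit 2 (cnot_perm ?r) 1 = (F 1 \<noteq> F 0)"
      by (simp_all only: qbit_cnot_perm)
    then have "qbit 2 (cnot_perm ?r) 0 = qbit n k a" "qbit 2 (cnot_perm ?r) 1 = (qbit n k b \<noteq> qbit n k a)"
      by (simp_all add: F_def)
    moreover have "list_pos [a, b] a = 0" "list_pos [a, b] b = 1"
      using list_pos_nth[OF distinct_block, of 0] list_pos_nth[OF distinct_block, of 1] by auto
    moreover have "length [a, b] = 2" by simp
    moreover fix q assume "q < n"
    ultimately show "qbit n (fill_block n [a, b] ?c (cnot_perm ?r)) q = qbit n (cnot_index n a b k) q"
      using ab by (simp add: qbit_fill_block qbit_erase_block qbit_cnot_index del: list.size)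
  qed
  finally show ?thesis .
qed

section \<open>Probabilities of the output qubit\<close>

lemma sum_split_first_qubit:
  assumes "m \<ge> 1"
  shows "(\<Sum>i<2 ^ m. f (qbit m i 0) i) =
    (\<Sum>i<2 ^ (m - 1). f False i) + (\<Sum>i<2 ^ (m - 1). f True (2 ^ (m - 1) + i))"
proof -
  define h :: nat where "h = 2 ^ (m - 1)"
  have "(2::nat) ^ m = h + h"
    using assms by (simp add: h_def flip: mult_2 power_Suc)
  then have "{..<2 ^ m} = {..<h} \<union> {h..<h + h}" by auto
  then have "(\<Sum>i<2 ^ m. f (qbit m i 0) i) =
      (\<Sum>i<h. f (qbit m i 0) i) + (\<Sum>i\<in>{h..<h + h}. f (qbit m i 0) i)"
    by (simp add: sum.union_disjoint[symmetric] ivl_disj_int)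
  also have "(\<Sum>i\<in>{h..<h + h}. f (qbit m i 0) i) = (\<Sum>i<h. f (qbit m (h + i) 0) (h + i))"
    using sum.shift_bounds_nat_ivl[of "\<lambda>i. f (qbit m i 0) i" 0 h h]
    by (simp add: atLeast0LessThan add.commute)
  also have "(\<Sum>i<h. f (qbit m i 0) i) = (\<Sum>i<h. f False i)"
    by (intro sum.cong) (simp_all add: qbit_def h_def)
  also have "(\<Sum>i<h. f (qbit m (h + i) 0) (h + i)) = (\<Sum>i<h. f True (h + i))"
    by (intro sum.cong) (simp_all add: qbit_def h_def)
  finally show ?thesis unfolding h_def .
qed

definition out_prob :: "complex mat \<Rightarrow> nat \<Rightarrow> bool \<Rightarrow> nat \<Rightarrow> real" where
  "out_prob U m b c = (\<Sum>k<2 ^ m. if qbit m k 0 = b then (cmod (U $$ (k, c)))\<^sup>2 else 0)"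

lemma adj_carrier: "U \<in> carrier_mat a b \<Longrightarrow> adj U \<in> carrier_mat b a"
  unfolding adj_def by simp

lemma adj_mult_diag:
  assumes U: "U \<in> carrier_mat d d'" and c: "c < d'"
  shows "(adj U * U) $$ (c, c) = of_real (\<Sum>k<d. (cmod (U $$ (k, c)))\<^sup>2)"
  using index_mult_mat_sum[OF adj_carrier[OF U] U c c] U c
  unfolding of_real_sum complex_norm_square by (simp add: adj_def mult.commute)

lemma mult_adj_diag:
  assumes U: "U \<in> carrier_mat d d'" and k: "k < d"
  shows "(U * adj U) $$ (k, k) = of_real (\<Sum>c<d'. (cmod (U $$ (k, c)))\<^sup>2)"
  using index_mult_mat_sum[OF U adj_carrier[OF U] k k] U k
  unfolding of_real_sum complex_norm_square by (simp add: adj_def)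

lemma unitary_col_norm:
  assumes "unitary_mat d U" "c < d"
  shows "(\<Sum>k<d. (cmod (U $$ (k, c)))\<^sup>2) = 1"
proof -
  have "U \<in> carrier_mat d d" "(adj U * U) $$ (c, c) = 1"
    using assms unfolding unitary_mat_def by simp_all
  then show ?thesis using adj_mult_diag[of U d d c] assms(2) by (metis of_real_eq_1_iff)
qed

lemma unitary_row_norm:
  assumes "unitary_mat d U" "k < d"
  shows "(\<Sum>c<d. (cmod (U $$ (k, c)))\<^sup>2) = 1"
proof -
  have "U \<in> carrier_mat d d" "(U * adj U) $$ (k, k) = 1"
    using assms unfolding unitary_mat_def by simp_all
  then show ?thesis using mult_adj_diag[of U d d k] assms(2) by (metis of_real_eq_1_iff)
qed

lemma Pi_acc_mult_entry:
  assumes U: "U \<in> carrier_mat (2 ^ m) d" and k: "k < 2 ^ m" and c: "c < d"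
  shows "(Pi_acc m * U) $$ (k, c) = (if qbit m k 0 then 0 else U $$ (k, c))"
proof -
  have "(Pi_acc m * U) $$ (k, c) = (\<Sum>l<2 ^ m. Pi_acc m $$ (k, l) * U $$ (l, c))"
    using U k c by (intro index_mult_mat_sum) (auto simp: Pi_acc_def)
  also have "\<dots> = (\<Sum>l<2 ^ m. if l = k then (if qbit m k 0 then 0 else U $$ (k, c)) else 0)"
    using k by (intro sum.cong refl) (auto simp: Pi_acc_def)
  finally show ?thesis using k by simp
qed

lemma mult_rho_init_entry:
  assumes A: "A \<in> carrier_mat d (2 ^ m)" and k: "k < d" and c: "c < 2 ^ m"
  shows "(A * rho_init m 1) $$ (k, c) = (if qbit m c 0 then 0 else A $$ (k, c) / 2 ^ (m - 1))"
proof -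
  have "(A * rho_init m 1) $$ (k, c) = (\<Sum>l<2 ^ m. A $$ (k, l) * rho_init m 1 $$ (l, c))"
    using A k c by (intro index_mult_mat_sum) (auto simp: rho_init_def)
  also have "\<dots> = (\<Sum>l<2 ^ m. if l = c then (if qbit m c 0 then 0 else A $$ (k, c) / 2 ^ (m - 1)) else 0)"
    using c by (intro sum.cong refl) (auto simp: rho_init_def)
  finally show ?thesis using c by simp
qed

lemma acceptance_diag_entry:
  assumes U: "U \<in> carrier_mat (2 ^ m) (2 ^ m)" and k: "k < 2 ^ m"
  shows "(Pi_acc m * U * rho_init m 1 * adj U) $$ (k, k) = of_real ((\<Sum>c<2 ^ m.
    if qbit m k 0 \<or> qbit m c 0 then 0 else (cmod (U $$ (k, c)))\<^sup>2) / 2 ^ (m - 1))"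
proof -
  let ?B = "Pi_acc m * U * rho_init m 1"
  have PU: "Pi_acc m * U \<in> carrier_mat (2 ^ m) (2 ^ m)"
    by (rule mult_carrier_mat[OF _ U]) (simp add: Pi_acc_def)
  then have B: "?B \<in> carrier_mat (2 ^ m) (2 ^ m)"
    by (rule mult_carrier_mat) (simp add: rho_init_def)
  have "(?B * adj U) $$ (k, k) = (\<Sum>c<2 ^ m. ?B $$ (k, c) * adj U $$ (c, k))"
    by (rule index_mult_mat_sum[OF B adj_carrier[OF U] k k])
  also have "\<dots> = (\<Sum>c<2 ^ m. of_real
      ((if qbit m k 0 \<or> qbit m c 0 then 0 else (cmod (U $$ (k, c)))\<^sup>2) / 2 ^ (m - 1)))"
  proof (rule sum.cong[OF refl])
    fix c assume "c \<in> {..<2 ^ m :: nat}"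
    then have c: "c < 2 ^ m" by simp
    have "?B $$ (k, c) = (if qbit m c 0 then 0 else (Pi_acc m * U) $$ (k, c) / 2 ^ (m - 1))"
      by (rule mult_rho_init_entry[OF PU k c])
    also have "\<dots> = (if qbit m k 0 \<or> qbit m c 0 then 0 else U $$ (k, c) / 2 ^ (m - 1))"
      by (simp add: Pi_acc_mult_entry[OF U k c])
    finally have "?B $$ (k, c) = \<dots>" .
    moreover have "U $$ (k, c) * cnj (U $$ (k, c)) = of_real ((cmod (U $$ (k, c)))\<^sup>2)"
      by (rule complex_norm_square[symmetric])
    ultimately show "?B $$ (k, c) * adj U $$ (c, k) = of_real
        ((if qbit m k 0 \<or> qbit m c 0 then 0 else (cmod (U $$ (k, c)))\<^sup>2) / 2 ^ (m - 1))"
      using U k c by (simp add: adj_def)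
  qed
  finally show ?thesis by (simp add: sum_divide_distrib)
qed

lemma p_acc_eq_sum_out_prob:
  assumes U: "U \<in> carrier_mat (2 ^ m) (2 ^ m)"
  shows "p_acc U m 1 = (\<Sum>c<2 ^ m. if qbit m c 0 then 0 else out_prob U m False c) / 2 ^ (m - 1)"
proof -
  let ?A = "Pi_acc m * U * rho_init m 1 * adj U"
  have "dim_row ?A = 2 ^ m" by (simp add: Pi_acc_def)
  then have "tr ?A = (\<Sum>k<2 ^ m. ?A $$ (k, k))" by (simp only: tr_def)
  also have "\<dots> = of_real (\<Sum>k<2 ^ m. (\<Sum>c<2 ^ m.
      if qbit m k 0 \<or> qbit m c 0 then 0 else (cmod (U $$ (k, c)))\<^sup>2) / 2 ^ (m - 1))"
    unfolding of_real_sum using acceptance_diag_entry[OF U] by (intro sum.cong) auto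
  finally have "p_acc U m 1 = (\<Sum>k<2 ^ m. \<Sum>c<2 ^ m.
      if qbit m k 0 \<or> qbit m c 0 then 0 else (cmod (U $$ (k, c)))\<^sup>2) / 2 ^ (m - 1)"
    unfolding p_acc_def by (simp add: sum_divide_distrib)
  also have "\<dots> = (\<Sum>c<2 ^ m. if qbit m c 0 then 0 else out_prob U m False c) / 2 ^ (m - 1)"
    unfolding out_prob_def by (subst sum.swap) (auto intro!: sum.cong)
  finally show ?thesis .
qed

lemma out_prob_True:
  assumes "unitary_mat (2 ^ m) U" "c < 2 ^ m"
  shows "out_prob U m True c = 1 - out_prob U m False c"
proof -
  have "out_prob U m True c + out_prob U m False c = (\<Sum>k<2 ^ m. (cmod (U $$ (k, c)))\<^sup>2)"
    unfolding out_prob_def sum.distrib[symmetric] by (intro sum.cong) auto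
  then show ?thesis using unitary_col_norm[OF assms] by simp
qed

lemma sum_out_prob_False:
  assumes "unitary_mat (2 ^ m) U" "m \<ge> 1"
  shows "(\<Sum>c<2 ^ m. out_prob U m False c) = 2 ^ (m - 1)"
proof -
  have "(\<Sum>c<2 ^ m. out_prob U m False c) =
      (\<Sum>k<2 ^ m. if qbit m k 0 then 0 else \<Sum>c<2 ^ m. (cmod (U $$ (k, c)))\<^sup>2)"
    unfolding out_prob_def by (subst sum.swap) (auto intro!: sum.cong)
  also have "\<dots> = (\<Sum>k<2 ^ m. if qbit m k 0 then 0 else 1)"
    using unitary_row_norm[OF assms(1)] by (intro sum.cong) auto
  also have "\<dots> = 2 ^ (m - 1)"
    using sum_split_first_qubit[OF assms(2), of "\<lambda>b k. if b then 0 else 1 :: real"] by simp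
  finally show ?thesis .
qed

section \<open>The circuit R^(N)\<close>

lemma Rsteps_carrier: "Rsteps Q w m j \<in> carrier_mat (2 ^ m) (2 ^ m)"
  by (induction j) (auto intro!: mult_carrier_mat embed_carrier)

declare Rsteps.simps [simp del]

locale repeated_circuit =
  fixes Q :: "complex mat" and w N :: nat
  assumes width_pos: "w \<ge> 1" and Q_carrier: "Q \<in> carrier_mat (2 ^ w) (2 ^ w)"
begin

text \<open>A definition rather than an abbreviation, so that the simplifier leaves 2 ^ nq alone.\<close>

definition nq :: nat where "nq = N * w + 1"

abbreviation S :: "nat \<Rightarrow> complex mat" where "S j \<equiv> Rsteps Q w nq j"

definition gate_qubits :: "nat \<Rightarrow> nat list" where
  "gate_qubits j = 0 # R_reg w (Suc j)"

lemma length_gate_qubits: "length (gate_qubits j) = w"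
  using width_pos by (simp add: gate_qubits_def R_reg_def)

lemma gate_qubits_nth: "t < w \<Longrightarrow> gate_qubits j ! t = (if t = 0 then 0 else j * w + t)"
  by (cases t) (auto simp: gate_qubits_def R_reg_def nth_upt)

lemma set_gate_qubits: "q \<in> set (gate_qubits j) \<longleftrightarrow> q = 0 \<or> j * w < q \<and> q < Suc j * w"
  by (auto simp: gate_qubits_def R_reg_def)

lemma X_qubit_less: "j < N \<Longrightarrow> Suc j * w < nq"
  using mult_le_mono1[of "Suc j" N w] by (simp add: nq_def)

lemma qubit_block_gate: "j < N \<Longrightarrow> qubit_block nq (gate_qubits j)"
  by unfold_locales (auto simp: gate_qubits_def R_reg_def dest: X_qubit_less)

lemma S_Suc_entry:
  assumes j: "j < N" and k: "k < 2 ^ nq" and i: "i < 2 ^ nq"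
  shows "S (Suc j) $$ (k, i) =
    (embed nq (gate_qubits j) Q * S j) $$ (cnot_index nq 0 (Suc j * w) k, i)"
proof -
  have "S (Suc j) = embed nq [0, Suc j * w] cnot * (embed nq (gate_qubits j) Q * S j)"
    by (simp add: Rsteps.simps gate_qubits_def X_reg_def
        assoc_mult_mat[OF embed_carrier embed_carrier Rsteps_carrier])
  moreover have "0 \<noteq> Suc j * w" "Suc j * w < nq"
    using width_pos X_qubit_less[OF j] by auto
  ultimately show ?thesis
    using embed_cnot_mult_entry[OF _ _ _ mult_carrier_mat[OF embed_carrier Rsteps_carrier] k i] by simp
qed

text \<open>
  The support invariant of the columns of S j: after step j the register X_j records O, so the
  O-bit of a nonzero entry (k, i) is determined by the X_j-bits of k and i.
\<close>

definition out_record :: "nat \<Rightarrow> nat \<Rightarrow> nat \<Rightarrow> bool" where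
  "out_record j k i = (if j = 0 then qbit nq i 0 else qbit nq k (j * w) \<noteq> qbit nq i (j * w))"

definition compatible :: "nat \<Rightarrow> nat \<Rightarrow> nat \<Rightarrow> bool" where
  "compatible j k i \<longleftrightarrow>
     (\<forall>q. j * w < q \<and> q < nq \<longrightarrow> qbit nq k q = qbit nq i q) \<and> qbit nq k 0 = out_record j k i"

lemma compatible_Suc:
  assumes j: "j < N" and l: "compatible j l i"
    and agree: "\<And>q. q < nq \<Longrightarrow> q \<notin> set (gate_qubits j) \<Longrightarrow>
      qbit nq l q = qbit nq (cnot_index nq 0 (Suc j * w) k) q"
  shows "compatible (Suc j) k i"
proof -
  have above: "qbit nq k q = qbit nq i q" if "Suc j * w < q" "q < nq" for q
    using that agree[of q] l by (auto simp: compatible_def set_gate_qubits qbit_cnot_index)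
  have "Suc j * w < nq" "Suc j * w \<notin> set (gate_qubits j)" "j * w < Suc j * w"
    using X_qubit_less[OF j] width_pos by (auto simp: set_gate_qubits)
  then have "qbit nq k 0 = out_record (Suc j) k i"
    using agree[of "Suc j * w"] l by (auto simp: compatible_def out_record_def qbit_cnot_index)
  with above show ?thesis unfolding compatible_def by blast
qed

lemma S_entry_nonzero_compatible:
  "j \<le> N \<Longrightarrow> k < 2 ^ nq \<Longrightarrow> i < 2 ^ nq \<Longrightarrow> S j $$ (k, i) \<noteq> 0 \<Longrightarrow> compatible j k i"
proof (induction j arbitrary: k)
  case 0
  then show ?case by (simp add: Rsteps.simps compatible_def out_record_def split: if_splits)
next
  case (Suc j)
  then have j: "j < N" by simp
  interpret qubit_block nq "gate_qubits j" by (rule qubit_block_gate[OF j])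
  let ?k = "cnot_index nq 0 (Suc j * w) k"
  let ?l = "\<lambda>s. fill_block nq (gate_qubits j) (erase_block nq (gate_qubits j) ?k) s"
  have "(\<Sum>s<2 ^ w. Q $$ (subidx nq (gate_qubits j) ?k, s) * S j $$ (?l s, i)) \<noteq> 0"
    using Suc.prems S_Suc_entry[OF j]
      embed_mult_entry[OF Rsteps_carrier cnot_index_less Suc.prems(3), of Q]
    by (simp add: length_gate_qubits)
  then obtain s where "S j $$ (?l s, i) \<noteq> 0"
    by (metis (no_types, lifting) mult_zero_right sum.neutral)
  with j have "compatible j (?l s) i"
    by (intro Suc.IH[OF _ fill_block_less Suc.prems(3)]) simp_all
  then show ?case
    by (rule compatible_Suc[OF j])
      (simp add: qbit_fill_block qbit_erase_block)
qed

definition gate_input :: "nat \<Rightarrow> bool \<Rightarrow> nat \<Rightarrow> nat" where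
  "gate_input j b i = nat_of_bits w (\<lambda>t. if t = 0 then b else qbit nq i (j * w + t))"

definition support_index :: "nat \<Rightarrow> nat \<Rightarrow> nat \<Rightarrow> nat" where
  "support_index j c i = fill_block nq (gate_qubits j) c (gate_input j (out_record j c i) i)"

lemma gate_input_less: "gate_input j b i < 2 ^ w"
  unfolding gate_input_def by (rule nat_of_bits_less)

lemma qbit_gate_input_0: "qbit w (gate_input j b i) 0 = b"
  using width_pos by (simp add: gate_input_def qbit_nat_of_bits)

lemma out_record_fill_block:
  assumes j: "j < N"
  shows "out_record j (fill_block nq (gate_qubits j) c s) i = out_record j c i"
proof (cases "j = 0")
  case False
  with j width_pos have "j * w < nq" "j * w \<notin> set (gate_qubits j)"
    using X_qubit_less[OF j] by (auto simp: set_gate_qubits)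
  then show ?thesis by (simp add: out_record_def qbit_fill_block)
qed (simp add: out_record_def)

lemma S_entry_nonzero_imp_gate_input:
  assumes j: "j < N" and i: "i < 2 ^ nq" and s: "s < 2 ^ w"
    and nz: "S j $$ (fill_block nq (gate_qubits j) c s, i) \<noteq> 0"
  shows "s = gate_input j (out_record j c i) i"
proof (rule qbit_eqI[OF s])
  interpret qubit_block nq "gate_qubits j" by (rule qubit_block_gate[OF j])
  show "gate_input j (out_record j c i) i < 2 ^ w"
    by (rule gate_input_less)
  have comp: "compatible j (fill_block nq (gate_qubits j) c s) i"
    using S_entry_nonzero_compatible[OF _ fill_block_less i nz] j by simp
  fix t assume t: "t < w"
  then have "qbit w s t = qbit nq (fill_block nq (gate_qubits j) c s) (gate_qubits j ! t)"
    by (simp add: qbit_fill_block_nth length_gate_qubits)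
  also have "\<dots> = qbit w (gate_input j (out_record j c i) i) t"
    using comp t X_qubit_less[OF j]
    by (auto simp: gate_qubits_nth compatible_def out_record_fill_block[OF j] gate_input_def
        qbit_nat_of_bits)
  finally show "qbit w s t = qbit w (gate_input j (out_record j c i) i) t" .
qed

lemma gate_mult_entry:
  assumes j: "j < N" and i: "i < 2 ^ nq" and c: "c \<in> zero_on_block nq (gate_qubits j)"
    and s: "s < 2 ^ w"
  shows "(embed nq (gate_qubits j) Q * S j) $$ (fill_block nq (gate_qubits j) c s, i) =
    Q $$ (s, gate_input j (out_record j c i) i) * S j $$ (support_index j c i, i)"
proof -
  interpret qubit_block nq "gate_qubits j" by (rule qubit_block_gate[OF j])
  let ?\<sigma> = "gate_input j (out_record j c i) i"
  have "(embed nq (gate_qubits j) Q * S j) $$ (fill_block nq (gate_qubits j) c s, i) =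
      (\<Sum>s'<2 ^ w. Q $$ (s, s') * S j $$ (fill_block nq (gate_qubits j) c s', i))"
    using embed_mult_entry[OF Rsteps_carrier fill_block_less i] s c
    by (simp add: length_gate_qubits subidx_fill_block erase_block_fill_block)
  also have "\<dots> = (\<Sum>s'<2 ^ w. if s' = ?\<sigma> then Q $$ (s, s') * S j $$ (fill_block nq (gate_qubits j) c s', i) else 0)"
    using S_entry_nonzero_imp_gate_input[OF j i] by (intro sum.cong refl) auto
  also have "\<dots> = Q $$ (s, ?\<sigma>) * S j $$ (support_index j c i, i)"
    by (simp add: support_index_def gate_input_less)
  finally show ?thesis .
qed

lemma out_prob_S_eq_support_sum:
  assumes j: "j < N" and i: "i < 2 ^ nq"
  shows "out_prob (S j) nq b i = (\<Sum>c\<in>zero_on_block nq (gate_qubits j).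
    if out_record j c i = b then (cmod (S j $$ (support_index j c i, i)))\<^sup>2 else 0)"
proof -
  interpret qubit_block nq "gate_qubits j" by (rule qubit_block_gate[OF j])
  let ?f = "\<lambda>c s. if qbit w s 0 = b then (cmod (S j $$ (fill_block nq (gate_qubits j) c s, i)))\<^sup>2 else 0"
  have "out_prob (S j) nq b i = (\<Sum>c\<in>zero_on_block nq (gate_qubits j). \<Sum>s<2 ^ w. ?f c s)"
    using qbit_fill_block_nth[of 0] width_pos
    by (simp add: out_prob_def sum_over_blocks length_gate_qubits gate_qubits_nth)
  also have "\<dots> = (\<Sum>c\<in>zero_on_block nq (gate_qubits j).
      if out_record j c i = b then (cmod (S j $$ (support_index j c i, i)))\<^sup>2 else 0)"
  proof (rule sum.cong[OF refl])
    fix c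
    have "(\<Sum>s<2 ^ w. ?f c s) =
        (\<Sum>s<2 ^ w. if s = gate_input j (out_record j c i) i then ?f c s else 0)"
      using S_entry_nonzero_imp_gate_input[OF j i] by (intro sum.cong refl) auto
    then show "(\<Sum>s<2 ^ w. ?f c s) =
        (if out_record j c i = b then (cmod (S j $$ (support_index j c i, i)))\<^sup>2 else 0)"
      by (simp add: support_index_def qbit_gate_input_0 gate_input_less)
  qed
  finally show ?thesis .
qed

lemma out_prob_Suc:
  assumes j: "j < N" and i: "i < 2 ^ nq"
  shows "out_prob (S (Suc j)) nq b i =
    (\<Sum>b'\<in>UNIV. out_prob Q w b (gate_input j b' i) * out_prob (S j) nq b' i)"
proof -
  interpret qubit_block nq "gate_qubits j" by (rule qubit_block_gate[OF j])
  let ?E = "embed nq (gate_qubits j) Q * S j"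
  let ?Z = "zero_on_block nq (gate_qubits j)"
  let ?g = "\<lambda>k::nat. if qbit nq k 0 = b then (cmod (?E $$ (k, i)))\<^sup>2 else 0"
  have X: "0 \<noteq> Suc j * w" "0 < nq"
    using width_pos X_qubit_less[OF j] by auto
  have "out_prob (S (Suc j)) nq b i = (\<Sum>k<2 ^ nq. ?g (cnot_index nq 0 (Suc j * w) k))"
    unfolding out_prob_def
  proof (rule sum.cong[OF refl])
    fix k :: nat assume "k \<in> {..<2 ^ nq}"
    then show "(if qbit nq k 0 = b then (cmod (S (Suc j) $$ (k, i)))\<^sup>2 else 0) =
        ?g (cnot_index nq 0 (Suc j * w) k)"
      by (simp only: S_Suc_entry[OF j _ i] qbit_cnot_index_control[OF X] lessThan_iff)
  qed
  also have "\<dots> = (\<Sum>k<2 ^ nq. ?g k)"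
    by (rule sum_cnot_index[OF X])
  also have "\<dots> = (\<Sum>c\<in>?Z. out_prob Q w b (gate_input j (out_record j c i) i) *
      (cmod (S j $$ (support_index j c i, i)))\<^sup>2)"
    unfolding sum_over_blocks
    using qbit_fill_block_nth[of 0] width_pos gate_mult_entry[OF j i]
    by (auto simp: length_gate_qubits gate_qubits_nth out_prob_def norm_mult power_mult_distrib
        sum_distrib_right intro!: sum.cong)
  also have "\<dots> = (\<Sum>c\<in>?Z. \<Sum>b'\<in>UNIV. if out_record j c i = b' then
      out_prob Q w b (gate_input j b' i) * (cmod (S j $$ (support_index j c i, i)))\<^sup>2 else 0)"
    by (simp add: UNIV_bool)
  also have "\<dots> = (\<Sum>b'\<in>UNIV. out_prob Q w b (gate_input j b' i) * out_prob (S j) nq b' i)"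
    by (subst sum.swap) (simp add: out_prob_S_eq_support_sum[OF j i] sum_distrib_left if_distrib
        cong: if_cong)
  finally show ?thesis .
qed

lemma out_prob_S_0:
  assumes "i < 2 ^ nq"
  shows "out_prob (S 0) nq b i = (if qbit nq i 0 = b then 1 else 0)"
proof -
  have "out_prob (S 0) nq b i = (\<Sum>k<2 ^ nq. if k = i then (if qbit nq i 0 = b then 1 else 0) else 0)"
    unfolding out_prob_def using assms by (intro sum.cong) (auto simp: Rsteps.simps)
  then show ?thesis using assms by simp
qed

lemma out_prob_S_cong:
  assumes "j \<le> N" "i < 2 ^ nq" "i' < 2 ^ nq" "\<And>q. q \<le> j * w \<Longrightarrow> qbit nq i q = qbit nq i' q"
  shows "out_prob (S j) nq b i = out_prob (S j) nq b i'"
  using assms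
proof (induction j arbitrary: b)
  case 0
  then show ?case by (simp add: out_prob_S_0 del: Rsteps.simps)
next
  case (Suc j)
  have "gate_input j b' i = gate_input j b' i'" for b'
    unfolding gate_input_def using Suc.prems(4) by (intro nat_of_bits_cong) simp
  moreover have "out_prob (S j) nq b' i = out_prob (S j) nq b' i'" for b'
    using Suc by (intro Suc.IH) auto
  ultimately show ?case
    using Suc.prems by (simp add: out_prob_Suc)
qed

text \<open>
  accept_weight j b is 2^(N w) times the probability that O reads b after j steps, starting from
  the initial state in which only O is clean; transition is the classical channel on O induced
  by one step, with the register R_j averaged out.
\<close>

definition accept_weight :: "nat \<Rightarrow> bool \<Rightarrow> real" where
  "accept_weight j b = (\<Sum>i<2 ^ nq. if qbit nq i 0 then 0 else out_prob (S j) nq b i)"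

definition transition :: "bool \<Rightarrow> bool \<Rightarrow> real" where
  "transition b b' =
     (\<Sum>r<2 ^ (w - 1). out_prob Q w b ((if b' then 2 ^ (w - 1) else 0) + r)) / 2 ^ (w - 1)"

lemma length_R_reg: "length (R_reg w (Suc j)) = w - 1"
  by (simp add: R_reg_def)

lemma R_reg_nth: "t < w - 1 \<Longrightarrow> R_reg w (Suc j) ! t = j * w + Suc t"
  by (simp add: R_reg_def nth_upt)

lemma qubit_block_R: "j < N \<Longrightarrow> qubit_block nq (R_reg w (Suc j))"
  by unfold_locales (auto simp: R_reg_def dest: X_qubit_less)

lemma gate_input_fill_R:
  assumes j: "j < N" and r: "r < 2 ^ (w - 1)"
  shows "gate_input j b (fill_block nq (R_reg w (Suc j)) c r) = (if b then 2 ^ (w - 1) else 0) + r"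
proof -
  interpret qubit_block nq "R_reg w (Suc j)" by (rule qubit_block_R[OF j])
  have first_bit: "nat_of_bits w F = (if F 0 then 2 ^ (w - 1) else 0) + nat_of_bits (w - 1) (\<lambda>t. F (Suc t))"
    for F using nat_of_bits_Suc[of "w - 1" F] width_pos by simp
  have "nat_of_bits (w - 1) (\<lambda>t. qbit nq (fill_block nq (R_reg w (Suc j)) c r) (j * w + Suc t)) =
      nat_of_bits (w - 1) (qbit (w - 1) r)"
  proof (rule nat_of_bits_cong)
    fix t assume "t < w - 1"
    then show "qbit nq (fill_block nq (R_reg w (Suc j)) c r) (j * w + Suc t) = qbit (w - 1) r t"
      using qbit_fill_block_nth[of t c r] R_reg_nth[of t j] by (simp add: length_R_reg)
  qed
  also have "\<dots> = r" using r by (rule nat_of_bits_qbit)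
  finally show ?thesis
    unfolding gate_input_def first_bit by simp
qed

lemma accept_weight_Suc:
  assumes j: "j < N"
  shows "accept_weight (Suc j) b = (\<Sum>b'\<in>UNIV. transition b b' * accept_weight j b')"
proof -
  interpret qubit_block nq "R_reg w (Suc j)" by (rule qubit_block_R[OF j])
  let ?F = "fill_block nq (R_reg w (Suc j))" and ?Z = "zero_on_block nq (R_reg w (Suc j))"
  let ?X = "\<lambda>b' r. out_prob Q w b ((if b' then 2 ^ (w - 1) else 0) + r)"
  let ?A = "\<lambda>b'. \<Sum>c\<in>?Z. if qbit nq c 0 then 0 else out_prob (S j) nq b' c"
  have qbit_0: "qbit nq (?F c r) 0 = qbit nq c 0" for c r
    using X_qubit_less[OF j] by (simp add: qbit_fill_block R_reg_def)
  have out_prob_F: "out_prob (S j) nq b' (?F c r) = out_prob (S j) nq b' c" if "c \<in> ?Z" for c r b'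
    using j that X_qubit_less[OF j]
    by (intro out_prob_S_cong) (auto simp: fill_block_less zero_on_block_def qbit_fill_block R_reg_def)
  have "accept_weight j b' = (\<Sum>c\<in>?Z. \<Sum>r\<in>{..<2 ^ (w - 1) :: nat}.
      if qbit nq c 0 then 0 else out_prob (S j) nq b' c)" for b'
    unfolding accept_weight_def sum_over_blocks length_R_reg
    by (intro sum.cong refl) (simp add: qbit_0 out_prob_F)
  then have "accept_weight j b' = 2 ^ (w - 1) * ?A b'" for b'
    by (simp add: sum_distrib_left)
  moreover have "accept_weight (Suc j) b = (\<Sum>b'\<in>UNIV. (\<Sum>r<2 ^ (w - 1). ?X b' r) * ?A b')"
  proof -
    have "accept_weight (Suc j) b = (\<Sum>c\<in>?Z. \<Sum>r<2 ^ (w - 1). \<Sum>b'\<in>UNIV.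
        if qbit nq c 0 then 0 else ?X b' r * out_prob (S j) nq b' c)"
      unfolding accept_weight_def sum_over_blocks length_R_reg
      by (intro sum.cong refl)
        (simp add: qbit_0 out_prob_F out_prob_Suc[OF j fill_block_less] gate_input_fill_R[OF j])
    also have "\<dots> = (\<Sum>b'\<in>UNIV. \<Sum>c\<in>?Z. \<Sum>r<2 ^ (w - 1).
        if qbit nq c 0 then 0 else ?X b' r * out_prob (S j) nq b' c)"
      by (simp add: sum.swap[of _ UNIV] sum.swap[of _ "{..<2 ^ (w - 1)}"])
    also have "\<dots> = (\<Sum>b'\<in>UNIV. (\<Sum>r<2 ^ (w - 1). ?X b' r) * ?A b')"
      by (auto simp: sum_distrib_left sum_distrib_right mult.commute intro!: sum.cong)
    finally show ?thesis .
  qed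
  ultimately show ?thesis
    by (simp add: transition_def)
qed

lemma transition_True:
  assumes "unitary_mat (2 ^ w) Q"
  shows "transition True b' = 1 - transition False b'"
proof -
  have "(2::nat) ^ w = 2 ^ (w - 1) + 2 ^ (w - 1)"
    using width_pos by (simp flip: mult_2 power_Suc)
  then have "(if b' then 2 ^ (w - 1) else 0) + r < (2::nat) ^ w" if "r < 2 ^ (w - 1)" for r
    using that by auto
  then have "(\<Sum>r<2 ^ (w - 1). out_prob Q w True ((if b' then 2 ^ (w - 1) else 0) + r)) =
      2 ^ (w - 1) - (\<Sum>r<2 ^ (w - 1). out_prob Q w False ((if b' then 2 ^ (w - 1) else 0) + r))"
    by (simp add: out_prob_True[OF assms] sum_subtractf)
  then show ?thesis
    by (simp add: transition_def diff_divide_distrib)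
qed

lemma transition_False_False: "transition False False = p_acc Q w 1"
  using p_acc_eq_sum_out_prob[OF Q_carrier]
    sum_split_first_qubit[OF width_pos, of "\<lambda>b c. if b then 0 else out_prob Q w False c"]
  by (simp add: transition_def)

lemma transition_False_True:
  assumes "unitary_mat (2 ^ w) Q"
  shows "transition False True = 1 - p_acc Q w 1"
proof -
  have "(\<Sum>c<2 ^ (w - 1). out_prob Q w False c) + (\<Sum>r<2 ^ (w - 1). out_prob Q w False (2 ^ (w - 1) + r)) =
      2 ^ (w - 1)"
    using sum_out_prob_False[OF assms width_pos]
      sum_split_first_qubit[OF width_pos, of "\<lambda>_ c. out_prob Q w False c"]
    by simp
  then show ?thesis
    using transition_False_False by (simp add: transition_def field_simps)
qed

lemma accept_weight_0: "accept_weight 0 False = 2 ^ (N * w)" "accept_weight 0 True = 0"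
proof -
  have "accept_weight 0 b = (\<Sum>i<2 ^ nq. if qbit nq i 0 then 0 else if b then 0 else 1)" for b
    unfolding accept_weight_def by (intro sum.cong) (auto simp: out_prob_S_0)
  moreover have "nq \<ge> 1" "nq - 1 = N * w" by (simp_all add: nq_def)
  ultimately show "accept_weight 0 False = 2 ^ (N * w)" "accept_weight 0 True = 0"
    using sum_split_first_qubit[of nq "\<lambda>b i. if b then 0 else 1 :: real"] by simp_all
qed

lemma accept_weight_closed_form:
  assumes Q: "unitary_mat (2 ^ w) Q" and "j \<le> N"
  shows "accept_weight j False = 2 ^ (N * w) * (1/2 + 1/2 * (2 * p_acc Q w 1 - 1) ^ j)
    \<and> accept_weight j True = 2 ^ (N * w) * (1/2 - 1/2 * (2 * p_acc Q w 1 - 1) ^ j)"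
  using \<open>j \<le> N\<close>
proof (induction j)
  case 0
  then show ?case by (simp add: accept_weight_0)
next
  case (Suc j)
  then have j: "j < N" and IH:
    "accept_weight j False = 2 ^ (N * w) * (1/2 + 1/2 * (2 * p_acc Q w 1 - 1) ^ j)"
    "accept_weight j True = 2 ^ (N * w) * (1/2 - 1/2 * (2 * p_acc Q w 1 - 1) ^ j)"
    by auto
  have "accept_weight (Suc j) b =
      transition b False * accept_weight j False + transition b True * accept_weight j True" for b
    using accept_weight_Suc[OF j] by (simp add: UNIV_bool add.commute)
  then have
    "accept_weight (Suc j) False =
      p_acc Q w 1 * accept_weight j False + (1 - p_acc Q w 1) * accept_weight j True"
    "accept_weight (Suc j) True =
      (1 - p_acc Q w 1) * accept_weight j False + p_acc Q w 1 * accept_weight j True"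
    by (simp_all add: transition_True[OF Q] transition_False_False transition_False_True[OF Q])
  then show ?case
    unfolding IH power_Suc by (simp add: field_simps)
qed

lemma p_acc_Rcirc: "p_acc (Rcirc Q w N) (N * w + 1) 1 = accept_weight N False / 2 ^ (N * w)"
  using p_acc_eq_sum_out_prob[OF Rsteps_carrier, of Q w nq N]
  by (simp add: Rcirc_def accept_weight_def nq_def)

end

theorem proposition12:
  fixes Q :: "complex mat" and w N :: nat
  assumes "w \<ge> 1" and "N \<ge> 1" and "unitary_mat (2 ^ w) Q"
  shows "p_acc (Rcirc Q w N) (N * w + 1) 1 = 1/2 + 1/2 * (2 * p_acc Q w 1 - 1) ^ N"
proof -
  interpret repeated_circuit Q w N
    using assms unfolding unitary_mat_def by unfold_locales simp_all
  show ?thesis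
    using p_acc_Rcirc accept_weight_closed_form[OF assms(3) order_refl] by simp
qed

end
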